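(* Let $d\ge2$ be even, $\mathcal I_d=\{-\tfrac d2,\ldots,\tfrac d2-1\}$, $\mathcal H_d$ with orthonormal basis $\{|j\rangle\}_{j\in\mathcal I_d}$, $|ij\rangle=|i\rangle\otimes|j\rangle$, $\omega^x=e^{2\pi ix/d}$ for real $x$, $\hat Q=\sum_j j|j\rangle\langle j|$, $\widetilde{|k\rangle}=d^{-1/2}\sum_j\omega^{kj}|j\rangle$, $\hat P=\sum_k k\widetilde{|k\rangle}\widetilde{\langle k|}$, $V_{\alpha\beta}=\omega^{\alpha\hat Q+\beta\hat Q^2}$, $\tilde V_{\alpha\beta}=\omega^{\alpha\hat P+\beta\hat P^2}$. Define $G(X)=\mathbb E_{\alpha\beta}V_{\alpha\beta}^{\otimes2}X(V_{\alpha\beta}^\dagger)^{\otimes2}$ and $\tilde G(X)=\mathbb E_{\alpha\beta}\tilde V_{\alpha\beta}^{\otimes2}X(\tilde V_{\alpha\beta}^\dagger)^{\otimes2}$ with $\alpha,\beta$ independent uniform on $[0,d)$, and $\mathcal R=G\circ\tilde G\circ G$. Let $I=\sum_{ab}|ab\rangle\langle ab|$, $F=\sum_{ab}|ab\rangle\langle ba|$, $E=\sum_i|ii\rangle\langle ii|$. Let $i\in\mathcal I_d$ and $u\in\mathcal I_d\setminus\{0\}$, where additions such as $i+u$, $a+u$ are taken modulo $d$ with values in $\mathcal I_d$. Then for $i,j,i',j'\in\mathcal I_d$ with $\{i',j'\}\ne\{i,j\}$, $\mathcal R(|ij\rangle\langle i'j'|)=0$, and $\mathcal R(|i,i+u\rangle\langle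 i,i+u|)=\frac1{d^2}\sum_a|a,a+u\rangle\langle a,a+u|+\frac I{d^2}-\frac{I+F-E}{d^3}$, $\mathcal R(|i,i+u\rangle\langle i+u,i|)=\frac1{d^2}\sum_a|a,a+u\rangle\langle a+u,a|+\frac F{d^2}-\frac{I+F-E}{d^3}$, $\mathcal R(|ii\rangle\langle ii|)=\frac{I+F}{d^2}-\frac{I+F-E}{d^3}$, with sums over $a\in\mathcal I_d$. *)

theory Defs
  imports "HOL-Analysis.Analysis"
begin

(* Single-qudit operators on H_d: matrices indexed by I_d (entries outside I_d are irrelevant).
   Two-qudit operators on H_d (x) H_d: matrices indexed by pairs (a,b) in I_d x I_d,
   the pair (a,b) standing for the basis vector |ab> = |a> (x) |b>. *)
type_synonym op1 = "int \<Rightarrow> int \<Rightarrow> complex"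
type_synonym op2 = "int \<times> int \<Rightarrow> int \<times> int \<Rightarrow> complex"

definition Idx :: "nat \<Rightarrow> int set" where
  "Idx d = {- (int d div 2) ..< int d div 2}"

definition addm :: "nat \<Rightarrow> int \<Rightarrow> int \<Rightarrow> int" where
  "addm d a u = ((a + u + int d div 2) mod int d) - int d div 2"

definition omega :: "nat \<Rightarrow> real \<Rightarrow> complex" where
  "omega d x = cis (2 * pi * x / real d)"

definition ket :: "int \<Rightarrow> int \<Rightarrow> complex" where
  "ket k j = (if j = k then 1 else 0)"

definition kett :: "nat \<Rightarrow> int \<Rightarrow> int \<Rightarrow> complex" where
  "kett d k j = omega d (real_of_int (k * j)) / complex_of_real (sqrt (real d))"

(* spectral calculus: given an orthonormal eigenbasis e_k (k in I_d) and values f k,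
   the operator sum_k f k |e_k><e_k| *)
definition spec_op :: "nat \<Rightarrow> (int \<Rightarrow> int \<Rightarrow> complex) \<Rightarrow> (int \<Rightarrow> complex) \<Rightarrow> op1" where
  "spec_op d e f j j' = (\<Sum>k\<in>Idx d. f k * e k j * cnj (e k j'))"

definition Vop :: "nat \<Rightarrow> real \<Rightarrow> real \<Rightarrow> op1" where
  "Vop d \<alpha> \<beta> = spec_op d ket (\<lambda>k. omega d (\<alpha> * real_of_int k + \<beta> * (real_of_int k)^2))"

definition Vtop :: "nat \<Rightarrow> real \<Rightarrow> real \<Rightarrow> op1" where
  "Vtop d \<alpha> \<beta> = spec_op d (kett d) (\<lambda>k. omega d (\<alpha> * real_of_int k + \<beta> * (real_of_int k)^2))"

definition conj2 :: "nat \<Rightarrow> op1 \<Rightarrow> op2 \<Rightarrow> op2" where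
  "conj2 d U X r s =
     (\<Sum>c\<in>Idx d. \<Sum>e\<in>Idx d. \<Sum>c'\<in>Idx d. \<Sum>e'\<in>Idx d.
        U (fst r) c * U (snd r) e * X (c, e) (c', e') * cnj (U (fst s) c') * cnj (U (snd s) e'))"

definition twirl :: "nat \<Rightarrow> (real \<Rightarrow> real \<Rightarrow> op1) \<Rightarrow> op2 \<Rightarrow> op2" where
  "twirl d W X r s =
     integral\<^sup>L (uniform_measure lborel ({0..<real d} \<times> {0..<real d}))
       (\<lambda>p. conj2 d (W (fst p) (snd p)) X r s)"

definition Gch :: "nat \<Rightarrow> op2 \<Rightarrow> op2" where
  "Gch d = twirl d (Vop d)"

definition Gtch :: "nat \<Rightarrow> op2 \<Rightarrow> op2" where
  "Gtch d = twirl d (Vtop d)"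

definition Rch :: "nat \<Rightarrow> op2 \<Rightarrow> op2" where
  "Rch d = Gch d \<circ> Gtch d \<circ> Gch d"

definition ketbra2 :: "int \<times> int \<Rightarrow> int \<times> int \<Rightarrow> op2" where
  "ketbra2 p q r s = (if r = p \<and> s = q then 1 else 0)"

definition Iop :: op2 where "Iop r s = (if r = s then 1 else 0)"
definition Fop :: op2 where "Fop r s = (if fst r = snd s \<and> snd r = fst s then 1 else 0)"
definition Eop :: op2 where
  "Eop r s = (if fst r = snd r \<and> r = s then 1 else 0)"

end

(*
  For integers n and m, the average of omega^(alpha n + beta m) over (alpha, beta) uniform in
  [0,d)^2 is 1 if n = m = 0 and 0 otherwise. Two pairs of integers with the same sum and the same
  sum of squares coincide up to order, so the twirl G multiplies the entry of X at (|ab>, |a'b'>)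
  by the indicator of {a', b'} = {a, b}.

  In the Fourier basis the twirl G~ has the same structure: G~(|p><q|) becomes a fourfold sum over
  frequencies with k1 + k2 = k3 + k4 and k1^2 + k2^2 = k3^2 + k4^2, which collapses to character
  sums sum_k omega^(k n) = d [d | n]. With x = r - p and y = s - q this gives
    G~(|p><q|)_(r,s) = ([x1 = y1] [x2 = y2] + [x1 = y2] [x2 = y1]) / d^2 - [x1 + x2 = y1 + y2] / d^3
  with brackets meaning congruence modulo d. In R = G G~ G the inner G already kills |p><q| unless
  {q1, q2} = {p1, p2}, and the outer G keeps only the entries with {s1, s2} = {r1, r2}, on which
  the last bracket is 1. The closed forms are then read off entry by entry, using that two indices
  in I_d are congruent modulo d only if they are equal.
*)

theory Submission
  imports Defs "HOL-Probability.Probability_Measure"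
begin

lemma omega_add: "omega d x * omega d y = omega d (x + y)"
  by (simp add: omega_def cis_mult add_divide_distrib distrib_left)

lemma omega_cnj: "cnj (omega d x) = omega d (- x)"
  by (simp add: omega_def cis_cnj)

lemma norm_omega [simp]: "norm (omega d x) = 1"
  by (simp add: omega_def)

lemma omega_power: "omega d x ^ j = omega d (real j * x)"
  unfolding omega_def Complex.DeMoivre by (simp add: mult_ac)

lemma omega_eq_exp: "omega d x = exp (\<i> * of_real (2 * pi / real d) * of_real x)"
  by (simp add: omega_def cis_conv_exp mult_ac)

lemma omega_mult_cnj:
  "omega d a * omega d b * cnj (omega d c) * cnj (omega d e) = omega d (a + b - c - e)"
  by (simp add: omega_cnj omega_add)

lemma omega_of_int_eq_1_iff:
  assumes "d > 0"
  shows "omega d (of_int n) = 1 \<longleftrightarrow> int d dvd n"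
proof
  assume "omega d (of_int n) = 1"
  then obtain m :: int where "2 * pi / real d * of_int n = 2 * pi * of_int m"
    unfolding omega_eq_exp exp_eq_1 by (auto simp flip: of_real_mult)
  then have "of_int n = real d * of_int m"
    using assms by (simp add: field_simps)
  then have "n = int d * m"
    by (metis of_int_eq_iff of_int_mult of_int_of_nat_eq)
  then show "int d dvd n" by simp
next
  assume "int d dvd n"
  then obtain m where "n = int d * m" by (elim dvdE)
  then have "2 * pi * of_int n / real d = 2 * pi * of_int m"
    using assms by simp
  then show "omega d (of_int n) = 1"
    by (simp add: omega_def)
qed

lemma continuous_on_omega [continuous_intros]: "continuous_on A (omega d)"
  unfolding omega_def divide_inverse by (intro continuous_intros)

lemma borel_measurable_omega [measurable]: "omega d \<in> borel_measurable borel"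
  by (intro borel_measurable_continuous_onI continuous_on_omega)

lemma finite_Idx [simp]: "finite (Idx d)"
  by (simp add: Idx_def)

lemma Idx_eq_image:
  assumes "even d"
  shows "Idx d = (\<lambda>j. int j - int d div 2) ` {0..<d}"
proof -
  have "Idx d = (\<lambda>x. x + - (int d div 2)) ` {0..<int d div 2 - - (int d div 2)}"
    unfolding Idx_def by (rule image_add_int_atLeastLessThan[symmetric])
  also have "{0..<int d div 2 - - (int d div 2)} = int ` {0..<d}"
    using assms by (auto simp: image_int_atLeastLessThan elim!: evenE)
  finally show ?thesis by (auto simp: image_image)
qed

lemma inj_on_int_diff: "inj_on (\<lambda>j. int j - c) A"
  by (auto simp: inj_on_def)

lemma card_Idx:
  assumes "even d"
  shows "card (Idx d) = d"
  by (simp add: Idx_eq_image[OF assms] card_image inj_on_int_diff)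

lemma sum_Idx_omega:
  assumes "even d" "d > 0"
  shows "(\<Sum>k\<in>Idx d. omega d (of_int (k * n))) = of_nat d * of_bool (int d dvd n)"
proof (cases "int d dvd n")
  case True
  then have "omega d (of_int (k * n)) = 1" for k
    using assms(2) by (metis dvd_mult omega_of_int_eq_1_iff)
  then show ?thesis
    using True by (simp add: card_Idx[OF assms(1)])
next
  case False
  define h where "h = int d div 2"
  define w where "w = omega d (of_int n)"
  have "w \<noteq> 1"
    using False assms(2) by (simp add: w_def omega_of_int_eq_1_iff)
  moreover have "w ^ d = 1"
    using omega_of_int_eq_1_iff[OF assms(2), of "int d * n"] by (simp add: w_def omega_power)
  ultimately have geometric: "(\<Sum>j<d. w ^ j) = 0"
    by (simp add: sum_gp_strict)
  have "(\<Sum>k\<in>Idx d. omega d (of_int (k * n))) = (\<Sum>j<d. omega d (of_int (- h * n)) * w ^ j)"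
    unfolding Idx_eq_image[OF assms(1)] h_def[symmetric]
    by (simp add: sum.reindex inj_on_int_diff h_def atLeast0LessThan w_def omega_power
        omega_add algebra_simps)
  also have "\<dots> = 0"
    by (simp add: geometric flip: sum_distrib_left)
  finally show ?thesis
    using False by simp
qed

lemma sum_Idx_Idx_omega:
  assumes "even d" "d > 0"
  shows "(\<Sum>k1\<in>Idx d. \<Sum>k2\<in>Idx d. omega d (of_int (k1 * n1 + k2 * n2))) =
    of_nat d ^ 2 * of_bool (int d dvd n1) * of_bool (int d dvd n2)"
proof -
  have "(\<Sum>k1\<in>Idx d. \<Sum>k2\<in>Idx d. omega d (of_int (k1 * n1 + k2 * n2))) =
      (\<Sum>k1\<in>Idx d. omega d (of_int (k1 * n1))) * (\<Sum>k2\<in>Idx d. omega d (of_int (k2 * n2)))"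
    by (simp add: sum_product omega_add)
  also have "\<dots> = of_nat d * of_bool (int d dvd n1) * (of_nat d * of_bool (int d dvd n2))"
    by (simp only: sum_Idx_omega[OF assms])
  finally show ?thesis
    by (simp add: power2_eq_square)
qed

lemma set_integral_omega:
  assumes "d > 0"
  shows "(LBINT x:{0..<real d}. omega d (x * of_int n)) = of_nat d * of_bool (n = 0)"
proof -
  define a where "a = \<i> * complex_of_real (2 * pi / real d) * of_int n"
  have "(LBINT x:{0..<real d}. omega d (x * of_int n)) = (LBINT x=0..real d. exp (a * of_real x))"
    using interval_integral_Ico[of 0 "real d" "\<lambda>x. exp (a * of_real x)"]
    by (simp add: omega_eq_exp a_def mult_ac zero_ereal_def)
  also have "\<dots> = of_nat d * of_bool (n = 0)"
  proof (cases "n = 0")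
    case True
    have "(LBINT x=ereal 0..ereal (real d). (1::complex)) = of_real (real d) - of_real 0"
    proof (rule interval_integral_FTC_finite)
      fix t :: real
      show "(complex_of_real has_vector_derivative 1)
          (at t within {min 0 (real d)..max 0 (real d)})"
        by (auto intro!: derivative_eq_intros simp: has_vector_derivative_def scaleR_conv_of_real)
    qed auto
    then show ?thesis
      using True by (simp add: a_def zero_ereal_def)
  next
    case False
    then have "a \<noteq> 0"
      using assms by (simp add: a_def)
    have "(LBINT x=ereal 0..ereal (real d). exp (a * of_real x)) =
        exp (a * of_real (real d)) / a - exp (a * of_real 0) / a"
    proof (rule interval_integral_FTC_finite)
      show "continuous_on {min 0 (real d)..max 0 (real d)} (\<lambda>x. exp (a * of_real x))"
        by (intro continuous_intros)
      fix t :: real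
      show "((\<lambda>x. exp (a * x) / a) has_vector_derivative exp (a * t))
          (at t within {min 0 (real d)..max 0 (real d)})"
        using \<open>a \<noteq> 0\<close>
        by (intro derivative_eq_intros
            has_complex_derivative_imp_has_vector_derivative[unfolded o_def] | simp)+
    qed
    also have "a * of_real (real d) = 2 * pi * of_int n * \<i>"
      using assms by (simp add: a_def field_simps)
    finally show ?thesis
      using False by (simp add: zero_ereal_def exp_eq_1)
  qed
  finally show ?thesis .
qed

definition uniform_square :: "nat \<Rightarrow> (real \<times> real) measure" where
  "uniform_square d = uniform_measure lborel ({0..<real d} \<times> {0..<real d})"

lemma emeasure_lborel_square:
  "emeasure lborel ({0..<real d} \<times> {0..<real d}) = ennreal (real d * real d)"
  by (simp add: lborel_prod[symmetric] lborel.emeasure_pair_measure_Times ennreal_mult)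

lemma prob_space_uniform_square: "d > 0 \<Longrightarrow> prob_space (uniform_square d)"
  unfolding uniform_square_def
  by (intro prob_space_uniform_measure) (simp_all add: emeasure_lborel_square)

lemma integrable_uniform_square_omega:
  assumes "d > 0"
  shows "integrable (uniform_square d) (\<lambda>p. c * omega d (fst p * a + snd p * b))"
proof -
  interpret prob_space "uniform_square d"
    using assms by (rule prob_space_uniform_square)
  show ?thesis
    by (intro integrable_const_bound[where B = "norm c"])
      (auto simp: uniform_square_def norm_mult lborel_prod[symmetric])
qed

lemma uniform_square_eq_density:
  assumes "d > 0"
  shows "uniform_square d =
    density lborel (\<lambda>p. indicator ({0..<real d} \<times> {0..<real d}) p / (real d * real d))"
proof -
  define S where "S = {0..<real d} \<times> {0..<real d}"
  have [measurable]: "S \<in> sets (borel \<Otimes>\<^sub>M borel)"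
    unfolding S_def by (intro pair_measureI) simp_all
  show ?thesis
    unfolding uniform_square_def uniform_measure_def S_def[symmetric]
  proof (rule density_cong)
    show "(\<lambda>p. indicator S p / emeasure lborel S) \<in> borel_measurable lborel"
      "(\<lambda>p. ennreal (indicator S p / (real d * real d))) \<in> borel_measurable lborel"
      unfolding measurable_lborel2 borel_prod[symmetric] by measurable
    show "AE p in lborel.
        indicator S p / emeasure lborel S = ennreal (indicator S p / (real d * real d))"
      using assms
      by (simp add: S_def emeasure_lborel_square divide_ennreal ennreal_indicator[symmetric])
  qed
qed

lemma average_omega_square:
  assumes "d > 0"
  shows "(\<integral>p. omega d (fst p * of_int n + snd p * of_int m) \<partial>uniform_square d) =
    of_bool (n = 0 \<and> m = 0)"
proof -
  define S where "S = {0..<real d} \<times> {0..<real d}"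
  define g where "g = (\<lambda>p::real \<times> real. omega d (fst p * of_int n + snd p * of_int m))"
  define w where "w = (\<lambda>p. indicator S p / (real d * real d))"
  define h where "h = (\<lambda>k x. indicator {0..<real d} x *\<^sub>R omega d (x * of_int k))"
  have [measurable]: "S \<in> sets (borel \<Otimes>\<^sub>M borel)"
    unfolding S_def by (intro pair_measureI) simp_all
  have [measurable]: "g \<in> borel_measurable lborel" "w \<in> borel_measurable lborel"
    unfolding g_def w_def measurable_lborel2 borel_prod[symmetric] by measurable
  have w_nonneg: "AE p in lborel. 0 \<le> w p"
    by (simp add: w_def)
  have uniform_square_density: "uniform_square d = density lborel w"
    unfolding uniform_square_eq_density[OF assms] w_def S_def ..
  have w_g: "w p *\<^sub>R g p = of_real (1 / (real d * real d)) * (h n (fst p) * h m (snd p))" for p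
    by (cases p) (auto simp: w_def g_def h_def S_def indicator_def omega_add[symmetric]
        scaleR_conv_of_real algebra_simps)
  have "integrable (density lborel w) g"
    using integrable_uniform_square_omega[OF assms, of 1]
    by (simp add: g_def uniform_square_density)
  then have "integrable lborel (\<lambda>p. of_real (real d * real d) * (w p *\<^sub>R g p))"
    by (intro integrable_mult_right) (simp add: integrable_density w_nonneg)
  also have "(\<lambda>p. of_real (real d * real d) * (w p *\<^sub>R g p)) = (\<lambda>(x, y). h n x * h m y)"
    using assms by (auto simp: w_g)
  finally have h_integrable: "integrable lborel (\<lambda>(x, y). h n x * h m y)" .
  have h_integral: "integral\<^sup>L lborel (h k) = of_nat d * of_bool (k = 0)" for k
    using set_integral_omega[OF assms, of k] by (simp add: h_def set_lebesgue_integral_def)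
  have "integral\<^sup>L (uniform_square d) g = integral\<^sup>L lborel (\<lambda>p. w p *\<^sub>R g p)"
    unfolding uniform_square_density by (rule integral_density) (simp_all add: w_nonneg)
  also have "\<dots> = of_real (1 / (real d * real d)) * integral\<^sup>L lborel (\<lambda>(x, y). h n x * h m y)"
    by (simp add: w_g case_prod_beta')
  also have "integral\<^sup>L lborel (\<lambda>(x, y). h n x * h m y) =
      (\<integral>x. (\<integral>y. h n x * h m y \<partial>lborel) \<partial>lborel)"
    using lborel_pair.integral_fst[of "\<lambda>x y. h n x * h m y"] h_integrable
    by (simp add: lborel_prod)
  also have "\<dots> = integral\<^sup>L lborel (h n) * integral\<^sup>L lborel (h m)"
    by simp
  finally show ?thesis
    using assms by (simp add: g_def h_integral)
qed

lemma average_omega_nested_sum: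
  assumes "d > 0"
  shows "(\<integral>p. (\<Sum>k1\<in>I. \<Sum>k2\<in>I. \<Sum>k3\<in>I. \<Sum>k4\<in>I.
            c k1 k2 k3 k4 *
            omega d (fst p * of_int (n k1 k2 k3 k4) + snd p * of_int (m k1 k2 k3 k4)))
          \<partial>uniform_square d)
       = (\<Sum>k1\<in>I. \<Sum>k2\<in>I. \<Sum>k3\<in>I. \<Sum>k4\<in>I.
            c k1 k2 k3 k4 * of_bool (n k1 k2 k3 k4 = 0 \<and> m k1 k2 k3 k4 = 0))"
  by (simp add: integral_sum integrable_sum integrable_uniform_square_omega[OF assms]
      average_omega_square[OF assms] del: of_int_add of_int_diff of_int_mult of_int_power)

lemma sum_and_sum_squares_eq_iff:
  fixes k1 k2 k3 k4 :: "'a::{idom, ring_char_0}"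
  shows "k1 + k2 - k3 - k4 = 0 \<and> k1\<^sup>2 + k2\<^sup>2 - k3\<^sup>2 - k4\<^sup>2 = 0 \<longleftrightarrow>
    (k3, k4) = (k1, k2) \<or> (k3, k4) = (k2, k1)"
proof
  assume sums: "k1 + k2 - k3 - k4 = 0 \<and> k1\<^sup>2 + k2\<^sup>2 - k3\<^sup>2 - k4\<^sup>2 = 0"
  then have k4: "k4 = k1 + k2 - k3"
    by (simp add: algebra_simps)
  have "2 * ((k3 - k1) * (k3 - k2)) = - (k1\<^sup>2 + k2\<^sup>2 - k3\<^sup>2 - k4\<^sup>2)"
    unfolding k4 by (simp add: power2_eq_square algebra_simps)
  then have "(k3 - k1) * (k3 - k2) = 0"
    using sums by simp
  then show "(k3, k4) = (k1, k2) \<or> (k3, k4) = (k2, k1)"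
    using k4 by auto
qed auto

lemma sum_pair_permutations:
  fixes c :: "'a \<Rightarrow> 'a \<Rightarrow> 'a \<Rightarrow> 'a \<Rightarrow> 'b::comm_ring_1"
  assumes "finite S"
  shows "(\<Sum>k1\<in>S. \<Sum>k2\<in>S. \<Sum>k3\<in>S. \<Sum>k4\<in>S.
            c k1 k2 k3 k4 * of_bool ((k3, k4) = (k1, k2) \<or> (k3, k4) = (k2, k1)))
       = (\<Sum>k1\<in>S. \<Sum>k2\<in>S. c k1 k2 k1 k2 + c k1 k2 k2 k1) - (\<Sum>k\<in>S. c k k k k)"
proof -
  have inner: "(\<Sum>k3\<in>S. \<Sum>k4\<in>S.
        c k1 k2 k3 k4 * of_bool ((k3, k4) = (k1, k2) \<or> (k3, k4) = (k2, k1)))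
      = c k1 k2 k1 k2 + c k1 k2 k2 k1 - (if k1 = k2 then c k1 k1 k1 k1 else 0)"
    if "k1 \<in> S" "k2 \<in> S" for k1 k2
  proof -
    have "c k1 k2 k3 k4 * of_bool ((k3, k4) = (k1, k2) \<or> (k3, k4) = (k2, k1)) =
        (if k4 = k2 then if k3 = k1 then c k1 k2 k1 k2 else 0 else 0)
        + (if k4 = k1 then if k3 = k2 then c k1 k2 k2 k1 else 0 else 0)
        - (if k4 = k1 then if k3 = k1 then if k1 = k2 then c k1 k1 k1 k1 else 0 else 0 else 0)"
      for k3 k4
      by auto
    then show ?thesis
      using that assms by (simp add: sum.distrib sum_subtractf)
  qed
  have "(\<Sum>k1\<in>S. \<Sum>k2\<in>S. \<Sum>k3\<in>S. \<Sum>k4\<in>S.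
            c k1 k2 k3 k4 * of_bool ((k3, k4) = (k1, k2) \<or> (k3, k4) = (k2, k1)))
      = (\<Sum>k1\<in>S. \<Sum>k2\<in>S. c k1 k2 k1 k2 + c k1 k2 k2 k1 - (if k1 = k2 then c k1 k1 k1 k1 else 0))"
    by (simp only: inner cong: sum.cong)
  also have "\<dots> = (\<Sum>k1\<in>S. \<Sum>k2\<in>S. c k1 k2 k1 k2 + c k1 k2 k2 k1) - (\<Sum>k\<in>S. c k k k k)"
    using assms by (simp add: sum.distrib sum_subtractf)
  finally show ?thesis .
qed

lemma Iop_eq_of_bool: "Iop r s = of_bool (s = r)"
  by (auto simp: Iop_def)

lemma Fop_eq_of_bool: "Fop r s = of_bool (s = prod.swap r)"
  by (cases r, cases s) (auto simp: Fop_def)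

lemma conj2_diagonal:
  assumes "\<And>j c. j \<in> Idx d \<Longrightarrow> U j c = (if c = j then f j else 0)"
    and "r \<in> Idx d \<times> Idx d" "s \<in> Idx d \<times> Idx d"
  shows "conj2 d U X r s = f (fst r) * f (snd r) * cnj (f (fst s)) * cnj (f (snd s)) * X r s"
proof -
  let ?R = "f (fst r) * f (snd r) * cnj (f (fst s)) * cnj (f (snd s)) * X r s"
  have "U (fst r) c * U (snd r) e * X (c, e) (c', e') * cnj (U (fst s) c') * cnj (U (snd s) e') =
      (if e' = snd s then if c' = fst s then if e = snd r then if c = fst r then ?R
       else 0 else 0 else 0 else 0)"
    for c e c' e'
    using assms by (cases r, cases s) auto
  then show ?thesis
    unfolding conj2_def using assms(2,3) by (cases r, cases s) simp
qed

lemma conj2_ketbra2: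
  assumes "p \<in> Idx d \<times> Idx d" "q \<in> Idx d \<times> Idx d"
  shows "conj2 d U (ketbra2 p q) r s =
    U (fst r) (fst p) * U (snd r) (snd p) * cnj (U (fst s) (fst q)) * cnj (U (snd s) (snd q))"
proof -
  let ?R = "U (fst r) (fst p) * U (snd r) (snd p) *
    cnj (U (fst s) (fst q)) * cnj (U (snd s) (snd q))"
  have "U (fst r) c * U (snd r) e * ketbra2 p q (c, e) (c', e') * cnj (U (fst s) c') *
      cnj (U (snd s) e') =
      (if e' = snd q then if c' = fst q then if e = snd p then if c = fst p then ?R
       else 0 else 0 else 0 else 0)"
    for c e c' e'
    by (cases p, cases q) (auto simp: ketbra2_def)
  then show ?thesis
    unfolding conj2_def using assms by (cases p, cases q) simp
qed

lemma Gch_apply: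
  assumes "d > 0" "r \<in> Idx d \<times> Idx d" "s \<in> Idx d \<times> Idx d"
  shows "Gch d X r s = of_bool (s = r \<or> s = prod.swap r) * X r s"
proof -
  obtain r1 r2 s1 s2 where rs: "r = (r1, r2)" "s = (s1, s2)"
    by (cases r, cases s)
  define n where "n = r1 + r2 - s1 - s2"
  define m where "m = r1\<^sup>2 + r2\<^sup>2 - s1\<^sup>2 - s2\<^sup>2"
  have "conj2 d (Vop d \<alpha> \<beta>) X r s = X r s * omega d (\<alpha> * of_int n + \<beta> * of_int m)" for \<alpha> \<beta>
  proof -
    define f where "f j = omega d (\<alpha> * of_int j + \<beta> * (of_int j)\<^sup>2)" for j
    have "Vop d \<alpha> \<beta> j c = (if c = j then f j else 0)" if "j \<in> Idx d" for j c
    proof -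
      have "Vop d \<alpha> \<beta> j c = (\<Sum>k\<in>Idx d. if k = j then (if c = j then f j else 0) else 0)"
        unfolding Vop_def spec_op_def ket_def f_def by (intro sum.cong) auto
      then show ?thesis
        using that by simp
    qed
    then have "conj2 d (Vop d \<alpha> \<beta>) X r s = f r1 * f r2 * cnj (f s1) * cnj (f s2) * X r s"
      using conj2_diagonal assms(2,3) rs by simp
    also have "f r1 * f r2 * cnj (f s1) * cnj (f s2) = omega d (\<alpha> * of_int n + \<beta> * of_int m)"
      unfolding f_def omega_mult_cnj n_def m_def by (simp add: algebra_simps)
    finally show ?thesis
      by (simp add: mult.commute)
  qed
  then have "Gch d X r s =
      X r s * (\<integral>p. omega d (fst p * of_int n + snd p * of_int m) \<partial>uniform_square d)"
    by (simp add: Gch_def twirl_def uniform_square_def[symmetric] mult_ac)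
  also have "\<dots> = X r s * of_bool (n = 0 \<and> m = 0)"
    by (simp only: average_omega_square[OF assms(1)])
  also have "n = 0 \<and> m = 0 \<longleftrightarrow> s = r \<or> s = prod.swap r"
    using sum_and_sum_squares_eq_iff[of r1 r2 s1 s2] by (simp add: n_def m_def rs)
  finally show ?thesis
    by (simp add: mult.commute)
qed

lemma Vtop_apply:
  "Vtop d \<alpha> \<beta> j c =
    (\<Sum>k\<in>Idx d. omega d (\<alpha> * of_int k + \<beta> * (of_int k)\<^sup>2 + of_int (k * (j - c)))) / of_nat d"
proof -
  have "kett d k j * cnj (kett d k c) = omega d (of_int (k * (j - c))) / of_nat d" for k
  proof -
    have "complex_of_real (sqrt (real d)) * complex_of_real (sqrt (real d)) = of_nat d"
      by (simp flip: of_real_mult)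
    then show ?thesis
      unfolding kett_def by (simp add: omega_cnj omega_add algebra_simps)
  qed
  then show ?thesis
    unfolding Vtop_def spec_op_def
    by (simp add: mult.assoc omega_add sum_divide_distrib)
qed

lemma Vtop_product:
  "Vtop d \<alpha> \<beta> r1 p1 * Vtop d \<alpha> \<beta> r2 p2 * cnj (Vtop d \<alpha> \<beta> s1 q1) * cnj (Vtop d \<alpha> \<beta> s2 q2) =
    (\<Sum>k1\<in>Idx d. \<Sum>k2\<in>Idx d. \<Sum>k3\<in>Idx d. \<Sum>k4\<in>Idx d.
      omega d (of_int (k1 * (r1 - p1) + k2 * (r2 - p2) - k3 * (s1 - q1) - k4 * (s2 - q2)))
      / of_nat d ^ 4 * omega d (\<alpha> * of_int (k1 + k2 - k3 - k4) +
        \<beta> * of_int (k1\<^sup>2 + k2\<^sup>2 - k3\<^sup>2 - k4\<^sup>2)))"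
  (is "_ = ?R")
proof -
  define f where "f x k = omega d (\<alpha> * of_int k + \<beta> * (of_int k)\<^sup>2 + of_int (k * x))" for x k
  have "Vtop d \<alpha> \<beta> r1 p1 * Vtop d \<alpha> \<beta> r2 p2 * cnj (Vtop d \<alpha> \<beta> s1 q1) *
      cnj (Vtop d \<alpha> \<beta> s2 q2) = (\<Sum>k1\<in>Idx d. f (r1 - p1) k1) * (\<Sum>k2\<in>Idx d. f (r2 - p2) k2) *
      cnj (\<Sum>k3\<in>Idx d. f (s1 - q1) k3) * cnj (\<Sum>k4\<in>Idx d. f (s2 - q2) k4) / of_nat d ^ 4"
    by (simp add: Vtop_apply f_def power4_eq_xxxx)
  also have "\<dots> = (\<Sum>k1\<in>Idx d. \<Sum>k2\<in>Idx d. \<Sum>k3\<in>Idx d. \<Sum>k4\<in>Idx d.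
      f (r1 - p1) k1 * f (r2 - p2) k2 * cnj (f (s1 - q1) k3) * cnj (f (s2 - q2) k4) / of_nat d ^ 4)"
    by (simp only: cnj_sum sum_divide_distrib[symmetric] sum_distrib_left[symmetric]
        sum_distrib_right[symmetric])
  also have "\<dots> = ?R"
    unfolding f_def omega_mult_cnj
    by (intro sum.cong refl) (simp add: omega_add algebra_simps power2_eq_square)
  finally show ?thesis .
qed

lemma Gtch_ketbra2:
  fixes r s :: "int \<times> int"
  assumes "even d" "d > 0" "p \<in> Idx d \<times> Idx d" "q \<in> Idx d \<times> Idx d"
  defines "x1 \<equiv> fst r - fst p" and "x2 \<equiv> snd r - snd p"
    and "y1 \<equiv> fst s - fst q" and "y2 \<equiv> snd s - snd q"
  shows "Gtch d (ketbra2 p q) r s =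
    (of_bool (int d dvd (x1 - y1)) * of_bool (int d dvd (x2 - y2))
      + of_bool (int d dvd (x1 - y2)) * of_bool (int d dvd (x2 - y1))) / of_nat d ^ 2
    - of_bool (int d dvd (x1 + x2 - y1 - y2)) / of_nat d ^ 3"
proof -
  define c where
    "c k1 k2 k3 k4 = omega d (of_int (k1 * x1 + k2 * x2 - k3 * y1 - k4 * y2)) / of_nat d ^ 4"
    for k1 k2 k3 k4
  have "Gtch d (ketbra2 p q) r s = (\<integral>z. (\<Sum>k1\<in>Idx d. \<Sum>k2\<in>Idx d. \<Sum>k3\<in>Idx d. \<Sum>k4\<in>Idx d.
      c k1 k2 k3 k4 * omega d (fst z * of_int (k1 + k2 - k3 - k4) +
        snd z * of_int (k1\<^sup>2 + k2\<^sup>2 - k3\<^sup>2 - k4\<^sup>2))) \<partial>uniform_square d)"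
    unfolding Gtch_def twirl_def uniform_square_def[symmetric] conj2_ketbra2[OF assms(3,4)]
      Vtop_product c_def x1_def x2_def y1_def y2_def ..
  also have "\<dots> = (\<Sum>k1\<in>Idx d. \<Sum>k2\<in>Idx d. \<Sum>k3\<in>Idx d. \<Sum>k4\<in>Idx d.
      c k1 k2 k3 k4 * of_bool ((k3, k4) = (k1, k2) \<or> (k3, k4) = (k2, k1)))"
    by (simp only: average_omega_nested_sum[OF assms(2)] sum_and_sum_squares_eq_iff)
  also have "\<dots> =
      (\<Sum>k1\<in>Idx d. \<Sum>k2\<in>Idx d. c k1 k2 k1 k2 + c k1 k2 k2 k1) - (\<Sum>k\<in>Idx d. c k k k k)"
    by (rule sum_pair_permutations) simp
  also have "(\<Sum>k1\<in>Idx d. \<Sum>k2\<in>Idx d. c k1 k2 k1 k2 + c k1 k2 k2 k1) =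
      ((\<Sum>k1\<in>Idx d. \<Sum>k2\<in>Idx d. omega d (of_int (k1 * (x1 - y1) + k2 * (x2 - y2)))) +
       (\<Sum>k1\<in>Idx d. \<Sum>k2\<in>Idx d. omega d (of_int (k1 * (x1 - y2) + k2 * (x2 - y1))))) / of_nat d ^ 4"
    by (simp add: c_def sum.distrib add_divide_distrib sum_divide_distrib algebra_simps)
  also have "(\<Sum>k\<in>Idx d. c k k k k) =
      (\<Sum>k\<in>Idx d. omega d (of_int (k * (x1 + x2 - y1 - y2)))) / of_nat d ^ 4"
    by (simp add: c_def sum_divide_distrib algebra_simps)
  finally show ?thesis
    by (simp only: sum_Idx_Idx_omega[OF assms(1,2)] sum_Idx_omega[OF assms(1,2)])
      (use assms(2) in \<open>simp add: field_simps power2_eq_square power3_eq_cube power4_eq_xxxx\<close>)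
qed

lemma Gtch_cong_Idx:
  assumes "\<And>a b. a \<in> Idx d \<times> Idx d \<Longrightarrow> b \<in> Idx d \<times> Idx d \<Longrightarrow> X a b = Y a b"
  shows "Gtch d X = Gtch d Y"
proof -
  have "conj2 d U X = conj2 d U Y" for U
    unfolding conj2_def by (intro ext sum.cong refl) (simp add: assms)
  then show ?thesis
    unfolding Gtch_def twirl_def by simp
qed

lemma Rch_ketbra2_eq_0:
  assumes "d > 0" "\<not> (q = p \<or> q = prod.swap p)" "r \<in> Idx d \<times> Idx d" "s \<in> Idx d \<times> Idx d"
  shows "Rch d (ketbra2 p q) r s = 0"
proof -
  have "Gtch d (Gch d (ketbra2 p q)) = Gtch d (\<lambda>_ _. 0)"
    using assms(1,2) by (intro Gtch_cong_Idx) (auto simp: Gch_apply ketbra2_def)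
  also have "Gtch d (\<lambda>_ _. 0) = (\<lambda>_ _. 0)"
    unfolding Gtch_def twirl_def conj2_def by simp
  finally show ?thesis
    using assms(3,4) by (simp add: Rch_def Gch_apply[OF assms(1)])
qed

lemma Rch_ketbra2:
  fixes r s :: "int \<times> int"
  assumes "even d" "d > 0" "p \<in> Idx d \<times> Idx d" "q \<in> Idx d \<times> Idx d"
    and "q = p \<or> q = prod.swap p" "r \<in> Idx d \<times> Idx d" "s \<in> Idx d \<times> Idx d"
  defines "x1 \<equiv> fst r - fst p" and "x2 \<equiv> snd r - snd p"
    and "y1 \<equiv> fst s - fst q" and "y2 \<equiv> snd s - snd q"
  shows "Rch d (ketbra2 p q) r s =
    of_bool (s = r \<or> s = prod.swap r) *
      (of_bool (int d dvd (x1 - y1)) * of_bool (int d dvd (x2 - y2))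
       + of_bool (int d dvd (x1 - y2)) * of_bool (int d dvd (x2 - y1))) / of_nat d ^ 2
    - (Iop r s + Fop r s - Eop r s) / of_nat d ^ 3"
proof -
  have "Gtch d (Gch d (ketbra2 p q)) = Gtch d (ketbra2 p q)"
    using assms(2,5) by (intro Gtch_cong_Idx) (auto simp: Gch_apply ketbra2_def)
  then have "Rch d (ketbra2 p q) r s =
      of_bool (s = r \<or> s = prod.swap r) * Gtch d (ketbra2 p q) r s"
    using assms(6,7) by (simp add: Rch_def Gch_apply[OF assms(2)])
  moreover have "s = r \<or> s = prod.swap r \<Longrightarrow> x1 + x2 - y1 - y2 = 0"
    using assms(5) unfolding x1_def x2_def y1_def y2_def by (cases r, cases p) auto
  moreover have "Iop r s + Fop r s - Eop r s = of_bool (s = r \<or> s = prod.swap r)"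
    by (cases r, cases s) (auto simp: Iop_def Fop_def Eop_def)
  ultimately show ?thesis
    unfolding Gtch_ketbra2[OF assms(1-4)] x1_def x2_def y1_def y2_def
    by (auto simp: diff_divide_distrib)
qed

lemma Idx_dvd_diff_iff:
  assumes "even d" "a \<in> Idx d" "b \<in> Idx d"
  shows "int d dvd (a - b) \<longleftrightarrow> a = b"
proof
  assume "int d dvd (a - b)"
  then obtain t where t: "a - b = int d * t"
    by (elim dvdE)
  have bounds: "- int d < a - b" "a - b < int d"
    using assms by (auto simp: Idx_def elim!: evenE)
  then have "0 < int d"
    by linarith
  moreover have "int d * - 1 < int d * t" "int d * t < int d * 1"
    using bounds by (simp_all add: t)
  ultimately have "- 1 < t" "t < 1"
    by (simp_all only: mult_less_cancel_left_pos)
  then have "t = 0"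
    by simp
  then show "a = b"
    using t by simp
qed simp

lemma addm_in_Idx:
  assumes "even d" "d > 0"
  shows "addm d a u \<in> Idx d"
  using assms by (auto simp: addm_def Idx_def elim!: evenE)

lemma dvd_addm_diff: "int d dvd (addm d a u - a - u)"
proof -
  have "addm d a u - a - u = (a + u + int d div 2) mod int d - (a + u + int d div 2)"
    unfolding addm_def by simp
  also have "int d dvd \<dots>"
    by (simp add: dvd_eq_mod_eq_0 mod_diff_left_eq)
  finally show ?thesis .
qed

lemma dvd_diff_iff_eq_addm:
  assumes "even d" "d > 0" "b \<in> Idx d"
  shows "int d dvd (b - a - u) \<longleftrightarrow> b = addm d a u"
proof -
  have "b - a - u = (b - addm d a u) + (addm d a u - a - u)"
    by simp
  then have "int d dvd (b - a - u) \<longleftrightarrow> int d dvd (b - addm d a u)"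
    by (simp only: dvd_add_left_iff dvd_addm_diff)
  also have "\<dots> \<longleftrightarrow> b = addm d a u"
    using assms by (intro Idx_dvd_diff_iff addm_in_Idx)
  finally show ?thesis .
qed

lemma dvd_diff_shift_iff:
  assumes "even d" "a \<in> Idx d" "b \<in> Idx d"
  shows "int d dvd (a - c - (b - c)) \<longleftrightarrow> a = b"
  using Idx_dvd_diff_iff[OF assms] by simp

lemma addm_ne_self:
  assumes "even d" "d > 0" "u \<in> Idx d" "u \<noteq> 0"
  shows "addm d a u \<noteq> a"
proof
  assume "addm d a u = a"
  then have "int d dvd (u - 0)"
    using dvd_addm_diff[of d a u] by simp
  moreover have "0 \<in> Idx d"
    using assms(1,2) by (auto simp: Idx_def elim!: evenE)
  ultimately show False
    using Idx_dvd_diff_iff[OF assms(1,3)] assms(4) by blast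
qed

lemma dvd_diff_addm_shift_iff:
  assumes "even d" "d > 0" "b \<in> Idx d"
  shows "int d dvd (a - i - (b - addm d i u)) \<longleftrightarrow> b = addm d a u"
    and "int d dvd (b - addm d i u - (a - i)) \<longleftrightarrow> b = addm d a u"
proof -
  have "b - addm d i u - (a - i) = (b - a - u) + - (addm d i u - i - u)"
    by simp
  then have "int d dvd (b - addm d i u - (a - i)) \<longleftrightarrow> int d dvd (b - a - u)"
    by (simp only: dvd_add_left_iff dvd_minus_iff dvd_addm_diff)
  then show "int d dvd (b - addm d i u - (a - i)) \<longleftrightarrow> b = addm d a u"
    using dvd_diff_iff_eq_addm[OF assms] by simp
  then show "int d dvd (a - i - (b - addm d i u)) \<longleftrightarrow> b = addm d a u"
    by (simp only: dvd_diff_commute)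
qed

lemma sum_ketbra2_addm:
  "(\<Sum>a\<in>Idx d. ketbra2 (a, addm d a u) (a, addm d a u) r s) =
    of_bool (s = r \<and> fst r \<in> Idx d \<and> snd r = addm d (fst r) u)"
proof -
  have "ketbra2 (a, addm d a u) (a, addm d a u) r s =
      (if a = fst r then of_bool (s = r \<and> snd r = addm d (fst r) u) else 0)" for a
    unfolding ketbra2_def by (cases r, cases s) (simp, blast)
  then show ?thesis
    by simp
qed

lemma sum_ketbra2_addm_swap:
  "(\<Sum>a\<in>Idx d. ketbra2 (a, addm d a u) (addm d a u, a) r s) =
    of_bool (s = prod.swap r \<and> fst r \<in> Idx d \<and> snd r = addm d (fst r) u)"
proof -
  have "ketbra2 (a, addm d a u) (addm d a u, a) r s =
      (if a = fst r then of_bool (s = prod.swap r \<and> snd r = addm d (fst r) u) else 0)" for a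
    unfolding ketbra2_def by (cases r, cases s) (simp, blast)
  then show ?thesis
    by simp
qed

lemma Rch_ketbra2_diagonal:
  assumes "even d" "d > 0" "i \<in> Idx d" "r \<in> Idx d \<times> Idx d" "s \<in> Idx d \<times> Idx d"
  shows "Rch d (ketbra2 (i, i) (i, i)) r s =
    (Iop r s + Fop r s) / of_nat d ^ 2 - (Iop r s + Fop r s - Eop r s) / of_nat d ^ 3"
proof -
  obtain r1 r2 s1 s2 where rs: "r = (r1, r2)" "s = (s1, s2)"
    by (cases r, cases s)
  have Idx: "r1 \<in> Idx d" "r2 \<in> Idx d" "s1 \<in> Idx d" "s2 \<in> Idx d"
    using assms(4,5) rs by auto
  have "of_bool (s = r \<or> s = prod.swap r) *
      (of_bool (int d dvd (r1 - i - (s1 - i))) * of_bool (int d dvd (r2 - i - (s2 - i)))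
       + of_bool (int d dvd (r1 - i - (s2 - i))) * of_bool (int d dvd (r2 - i - (s1 - i))))
      = Iop r s + Fop r s"
  proof (simp only: dvd_diff_shift_iff[OF assms(1)] Idx)
    consider "s1 = r1" "s2 = r2" | "s1 = r2" "s2 = r1" | "s \<noteq> r" "s \<noteq> prod.swap r"
      using rs by auto
    then show "of_bool (s = r \<or> s = prod.swap r) *
        (of_bool (r1 = s1) * of_bool (r2 = s2) + of_bool (r1 = s2) * of_bool (r2 = s1))
        = Iop r s + Fop r s"
    proof cases
      case 3
      then show ?thesis
        by (simp add: Iop_eq_of_bool Fop_eq_of_bool)
    qed (cases "r1 = r2"; simp add: rs Iop_eq_of_bool Fop_eq_of_bool)+
  qed
  then show ?thesis
    using Rch_ketbra2[OF assms(1,2) _ _ _ assms(4,5), of "(i, i)" "(i, i)"] assms(3)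
    by (simp add: rs)
qed

lemma Rch_ketbra2_shift:
  assumes even: "even d" and pos: "d > 0" and i: "i \<in> Idx d" and u: "u \<in> Idx d" "u \<noteq> 0"
    and rs_Idx: "r \<in> Idx d \<times> Idx d" "s \<in> Idx d \<times> Idx d"
  shows "Rch d (ketbra2 (i, addm d i u) (i, addm d i u)) r s =
    (\<Sum>a\<in>Idx d. ketbra2 (a, addm d a u) (a, addm d a u) r s) / of_nat d ^ 2
    + Iop r s / of_nat d ^ 2 - (Iop r s + Fop r s - Eop r s) / of_nat d ^ 3"
proof -
  define j where "j = addm d i u"
  obtain r1 r2 s1 s2 where rs: "r = (r1, r2)" "s = (s1, s2)"
    by (cases r, cases s)
  have Idx: "r1 \<in> Idx d" "r2 \<in> Idx d" "s1 \<in> Idx d" "s2 \<in> Idx d"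
    using rs_Idx rs by auto
  have addm_ne: "addm d a u \<noteq> a" "a \<noteq> addm d a u" for a
    using addm_ne_self[OF even pos u] by metis+
  have "of_bool (s = r \<or> s = prod.swap r) *
      (of_bool (int d dvd (r1 - i - (s1 - i))) * of_bool (int d dvd (r2 - j - (s2 - j)))
       + of_bool (int d dvd (r1 - i - (s2 - j))) * of_bool (int d dvd (r2 - j - (s1 - i))))
      = (\<Sum>a\<in>Idx d. ketbra2 (a, addm d a u) (a, addm d a u) r s) + Iop r s"
    unfolding j_def
  proof (simp only: dvd_diff_shift_iff[OF even] dvd_diff_addm_shift_iff[OF even pos] Idx)
    consider "s1 = r1" "s2 = r2" | "s1 = r2" "s2 = r1" | "s \<noteq> r" "s \<noteq> prod.swap r"
      using rs by auto
    then show "of_bool (s = r \<or> s = prod.swap r) *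
        (of_bool (r1 = s1) * of_bool (r2 = s2)
         + of_bool (s2 = addm d r1 u) * of_bool (r2 = addm d s1 u))
        = (\<Sum>a\<in>Idx d. ketbra2 (a, addm d a u) (a, addm d a u) r s) + Iop r s"
    proof cases
      case 3
      then show ?thesis
        by (simp add: Iop_eq_of_bool sum_ketbra2_addm)
    qed (cases "r1 = r2"; simp add: rs Iop_eq_of_bool sum_ketbra2_addm addm_ne Idx)+
  qed
  then show ?thesis
    using Rch_ketbra2[OF even pos _ _ _ rs_Idx, of "(i, j)" "(i, j)"] i addm_in_Idx[OF even pos]
    by (simp add: rs j_def add_divide_distrib)
qed

lemma Rch_ketbra2_shift_swap:
  assumes even: "even d" and pos: "d > 0" and i: "i \<in> Idx d" and u: "u \<in> Idx d" "u \<noteq> 0"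
    and rs_Idx: "r \<in> Idx d \<times> Idx d" "s \<in> Idx d \<times> Idx d"
  shows "Rch d (ketbra2 (i, addm d i u) (addm d i u, i)) r s =
    (\<Sum>a\<in>Idx d. ketbra2 (a, addm d a u) (addm d a u, a) r s) / of_nat d ^ 2
    + Fop r s / of_nat d ^ 2 - (Iop r s + Fop r s - Eop r s) / of_nat d ^ 3"
proof -
  define j where "j = addm d i u"
  obtain r1 r2 s1 s2 where rs: "r = (r1, r2)" "s = (s1, s2)"
    by (cases r, cases s)
  have Idx: "r1 \<in> Idx d" "r2 \<in> Idx d" "s1 \<in> Idx d" "s2 \<in> Idx d"
    using rs_Idx rs by auto
  have addm_ne: "addm d a u \<noteq> a" "a \<noteq> addm d a u" for a
    using addm_ne_self[OF even pos u] by metis+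
  have "of_bool (s = r \<or> s = prod.swap r) *
      (of_bool (int d dvd (r1 - i - (s1 - j))) * of_bool (int d dvd (r2 - j - (s2 - i)))
       + of_bool (int d dvd (r1 - i - (s2 - i))) * of_bool (int d dvd (r2 - j - (s1 - j))))
      = (\<Sum>a\<in>Idx d. ketbra2 (a, addm d a u) (addm d a u, a) r s) + Fop r s"
    unfolding j_def
  proof (simp only: dvd_diff_shift_iff[OF even] dvd_diff_addm_shift_iff[OF even pos] Idx)
    consider "s1 = r1" "s2 = r2" | "s1 = r2" "s2 = r1" | "s \<noteq> r" "s \<noteq> prod.swap r"
      using rs by auto
    then show "of_bool (s = r \<or> s = prod.swap r) *
        (of_bool (s1 = addm d r1 u) * of_bool (r2 = addm d s2 u)
         + of_bool (r1 = s2) * of_bool (r2 = s1))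
        = (\<Sum>a\<in>Idx d. ketbra2 (a, addm d a u) (addm d a u, a) r s) + Fop r s"
    proof cases
      case 3
      then show ?thesis
        by (simp add: Fop_eq_of_bool sum_ketbra2_addm_swap)
    qed (cases "r1 = r2"; simp add: rs Fop_eq_of_bool sum_ketbra2_addm_swap addm_ne Idx)+
  qed
  then show ?thesis
    using Rch_ketbra2[OF even pos _ _ _ rs_Idx, of "(i, j)" "(j, i)"] i addm_in_Idx[OF even pos]
    by (simp add: rs j_def add_divide_distrib)
qed

theorem lemma5:
  fixes d :: nat and i u :: int
  assumes "even d" and "d \<ge> 2"
    and "i \<in> Idx d" and "u \<in> Idx d" and "u \<noteq> 0"
  shows
   "(\<forall>i1\<in>Idx d. \<forall>j1\<in>Idx d. \<forall>i2\<in>Idx d. \<forall>j2\<in>Idx d. {i2, j2} \<noteq> {i1, j1} \<longrightarrow>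
       (\<forall>r\<in>Idx d \<times> Idx d. \<forall>s\<in>Idx d \<times> Idx d. Rch d (ketbra2 (i1, j1) (i2, j2)) r s = 0))
  \<and> (\<forall>r\<in>Idx d \<times> Idx d. \<forall>s\<in>Idx d \<times> Idx d.
       Rch d (ketbra2 (i, addm d i u) (i, addm d i u)) r s =
         (\<Sum>a\<in>Idx d. ketbra2 (a, addm d a u) (a, addm d a u) r s) / (of_nat d)^2
         + Iop r s / (of_nat d)^2 - (Iop r s + Fop r s - Eop r s) / (of_nat d)^3)
  \<and> (\<forall>r\<in>Idx d \<times> Idx d. \<forall>s\<in>Idx d \<times> Idx d.
       Rch d (ketbra2 (i, addm d i u) (addm d i u, i)) r s =
         (\<Sum>a\<in>Idx d. ketbra2 (a, addm d a u) (addm d a u, a) r s) / (of_nat d)^2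
         + Fop r s / (of_nat d)^2 - (Iop r s + Fop r s - Eop r s) / (of_nat d)^3)
  \<and> (\<forall>r\<in>Idx d \<times> Idx d. \<forall>s\<in>Idx d \<times> Idx d.
       Rch d (ketbra2 (i, i) (i, i)) r s =
         (Iop r s + Fop r s) / (of_nat d)^2 - (Iop r s + Fop r s - Eop r s) / (of_nat d)^3)"
proof (intro conjI ballI impI)
  fix i1 j1 i2 j2 :: int and r s :: "int \<times> int"
  assume "{i2, j2} \<noteq> {i1, j1}" "r \<in> Idx d \<times> Idx d" "s \<in> Idx d \<times> Idx d"
  then show "Rch d (ketbra2 (i1, j1) (i2, j2)) r s = 0"
    using assms(2) by (intro Rch_ketbra2_eq_0) (auto simp: doubleton_eq_iff)
qed (use assms(2) in \<open>simp_all add: Rch_ketbra2_shift[OF assms(1) _ assms(3-5)]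
      Rch_ketbra2_shift_swap[OF assms(1) _ assms(3-5)]
      Rch_ketbra2_diagonal[OF assms(1) _ assms(3)]\<close>)

end
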